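(* For every integer $n\ge 2$, the shift graph $S_n$ has symmetric difference at most $2$.
   Context: The shift graph $S_n$ has vertex set $\{(i,j): 1\le i<j\le n\}$, with $(i,j)$ adjacent to $(k,\ell)$ whenever $j=k$ or $i=\ell$. For a graph $G$ and distinct vertices $u,v$, $\mathrm{sd}_G(u,v) := |(N_G(u)\setminus\{v\}) \triangle (N_G(v)\setminus\{u\})|$. The symmetric difference of $G$ is $\max_H\min_{u\ne v\in V(H)}\mathrm{sd}_H(u,v)$, with $H$ ranging over induced subgraphs of $G$ having at least two vertices. *)

theory Defs
  imports Main
begin

text \<open>A (finite simple) graph is given by a vertex set V and an adjacency relation E
  (symmetric, irreflexive on V).  Induced subgraphs are given by vertex subsets W.\<close>

definition nbhd :: "'a set \<Rightarrow> ('a \<Rightarrow> 'a \<Rightarrow> bool) \<Rightarrow> 'a \<Rightarrow> 'a set" where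
  "nbhd W E u = {w \<in> W. E u w}"

definition sd :: "'a set \<Rightarrow> ('a \<Rightarrow> 'a \<Rightarrow> bool) \<Rightarrow> 'a \<Rightarrow> 'a \<Rightarrow> nat" where
  "sd W E u v = card (((nbhd W E u - {v}) - (nbhd W E v - {u})) \<union>
                      ((nbhd W E v - {u}) - (nbhd W E u - {v})))"

definition min_sd :: "'a set \<Rightarrow> ('a \<Rightarrow> 'a \<Rightarrow> bool) \<Rightarrow> nat" where
  "min_sd W E = Min {sd W E u v | u v. u \<in> W \<and> v \<in> W \<and> u \<noteq> v}"

text \<open>Symmetric difference of G = (V,E): max over induced subgraphs with at least two vertices
  (convention: 0 if there is no such induced subgraph, e.g. S_2 has a single vertex).\<close>
definition symm_diff :: "'a set \<Rightarrow> ('a \<Rightarrow> 'a \<Rightarrow> bool) \<Rightarrow> nat" where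
  "symm_diff V E = (let F = {min_sd W E | W. W \<subseteq> V \<and> 2 \<le> card W}
                    in if F = {} then 0 else Max F)"

definition shift_vertices :: "nat \<Rightarrow> (nat \<times> nat) set" where
  "shift_vertices n = {(i, j). 1 \<le> i \<and> i < j \<and> j \<le> n}"

definition shift_adj :: "(nat \<times> nat) \<Rightarrow> (nat \<times> nat) \<Rightarrow> bool" where
  "shift_adj p q = (snd p = fst q \<or> fst p = snd q)"

end

theory Submission
  imports Defs
begin

text \<open>Let W induce a subgraph of the shift graph.  Two vertices (k,y) and (k',y) ending at
  the same y have the same out-neighbours, so their neighbourhoods differ only in the vertices
  ending at k or at k'.  If y is least such that two vertices of W end at y, at most one vertex
  ends at each of k, k' < y, so the pair has sd \<le> 2; dually for the greatest x at which two
  vertices start.  If neither exists, every vertex has degree at most 2, and then an isolated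
  vertex or an adjacent pair has sd \<le> 2.\<close>

lemma sd_le_card_cover:
  assumes "finite A" "finite B"
    and "((nbhd W E u - {v}) - (nbhd W E v - {u})) \<union>
         ((nbhd W E v - {u}) - (nbhd W E u - {v})) \<subseteq> A \<union> B"
  shows "sd W E u v \<le> card A + card B"
proof -
  have "sd W E u v \<le> card (A \<union> B)"
    unfolding sd_def using assms by (intro card_mono) auto
  also have "\<dots> \<le> card A + card B" by (rule card_Un_le)
  finally show ?thesis .
qed

lemma finite_nbhd: "finite W \<Longrightarrow> finite (nbhd W E u)"
  by (simp add: nbhd_def)

lemma sd_le_degrees:
  assumes "finite W"
  shows "sd W E u v \<le> card (nbhd W E u - {v}) + card (nbhd W E v - {u})"
  using assms by (intro sd_le_card_cover) (auto simp: finite_nbhd)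

lemma obtain_two_distinct:
  assumes "2 \<le> card A"
  obtains a b where "a \<in> A" "b \<in> A" "a \<noteq> b"
  using assms by (auto simp: numeral_2_eq_2 card_le_Suc_iff)

lemma exists_small_sd_if_max_degree_le_2:
  assumes fin: "finite W" and card: "2 \<le> card W"
    and sym: "\<And>u v. u \<in> W \<Longrightarrow> v \<in> W \<Longrightarrow> E u v \<Longrightarrow> E v u"
    and irrefl: "\<And>u. u \<in> W \<Longrightarrow> \<not> E u u"
    and degree: "\<And>u. u \<in> W \<Longrightarrow> card (nbhd W E u) \<le> 2"
  shows "\<exists>u\<in>W. \<exists>v\<in>W. u \<noteq> v \<and> sd W E u v \<le> 2"
proof -
  obtain u w where uw: "u \<in> W" "w \<in> W" "u \<noteq> w"
    using obtain_two_distinct[OF card] by blast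
  show ?thesis
  proof (cases "nbhd W E u = {}")
    case True
    have "sd W E u w \<le> card (nbhd W E w - {u})"
      using sd_le_degrees[OF fin, of E u w] True by simp
    also have "\<dots> \<le> 2"
      using degree[OF uw(2)] card_Diff1_le[of "nbhd W E w" u] by linarith
    finally show ?thesis using uw by blast
  next
    case False
    then obtain v where v: "v \<in> W" "E u v" by (auto simp: nbhd_def)
    have "u \<noteq> v" using irrefl uw(1) v(2) by blast
    have "v \<in> nbhd W E u" "u \<in> nbhd W E v"
      using v uw(1) sym by (auto simp: nbhd_def)
    then have "card (nbhd W E u - {v}) \<le> 1" "card (nbhd W E v - {u}) \<le> 1"
      using degree[OF uw(1)] degree[OF v(1)] by (simp_all add: card_Diff_singleton finite_nbhd fin)
    then have "sd W E u v \<le> 2"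
      using sd_le_degrees[OF fin, of E u v] by linarith
    then show ?thesis using uw(1) v(1) \<open>u \<noteq> v\<close> by blast
  qed
qed

definition ends_at :: "(nat \<times> nat) set \<Rightarrow> nat \<Rightarrow> (nat \<times> nat) set" where
  "ends_at W y = {w \<in> W. snd w = y}"

definition starts_at :: "(nat \<times> nat) set \<Rightarrow> nat \<Rightarrow> (nat \<times> nat) set" where
  "starts_at W x = {w \<in> W. fst w = x}"

lemma nbhd_shift_adj: "nbhd W shift_adj u = starts_at W (snd u) \<union> ends_at W (fst u)"
  by (auto simp: nbhd_def shift_adj_def ends_at_def starts_at_def)

lemma sd_shift_adj_same_end:
  assumes "finite W" "k < y" "k' < y" "card (ends_at W k) \<le> 1" "card (ends_at W k') \<le> 1"
  shows "sd W shift_adj (k, y) (k', y) \<le> 2"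
proof -
  have "sd W shift_adj (k, y) (k', y) \<le> card (ends_at W k) + card (ends_at W k')"
    using assms(1-3) by (intro sd_le_card_cover) (auto simp: nbhd_shift_adj ends_at_def starts_at_def)
  then show ?thesis using assms(4,5) by linarith
qed

lemma sd_shift_adj_same_start:
  assumes "finite W" "x < j" "x < j'" "card (starts_at W j) \<le> 1" "card (starts_at W j') \<le> 1"
  shows "sd W shift_adj (x, j) (x, j') \<le> 2"
proof -
  have "sd W shift_adj (x, j) (x, j') \<le> card (starts_at W j) + card (starts_at W j')"
    using assms(1-3) by (intro sd_le_card_cover) (auto simp: nbhd_shift_adj ends_at_def starts_at_def)
  then show ?thesis using assms(4,5) by linarith
qed

lemma exists_small_sd_if_crowded_end:
  assumes fin: "finite W" and below: "\<And>w. w \<in> W \<Longrightarrow> fst w < snd w"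
    and crowded: "2 \<le> card (ends_at W y)"
  shows "\<exists>u\<in>W. \<exists>v\<in>W. u \<noteq> v \<and> sd W shift_adj u v \<le> 2"
  using crowded
proof (induction y rule: less_induct)
  case (less y)
  obtain u v where uv: "u \<in> ends_at W y" "v \<in> ends_at W y" "u \<noteq> v"
    using obtain_two_distinct[OF less.prems] by blast
  then obtain k k' where kk': "u = (k, y)" "v = (k', y)" "u \<in> W" "v \<in> W"
    by (cases u, cases v) (auto simp: ends_at_def)
  then have "k < y" "k' < y" using below by force+
  show ?case
  proof (cases "card (ends_at W k) \<le> 1 \<and> card (ends_at W k') \<le> 1")
    case True
    then show ?thesis
      using sd_shift_adj_same_end[OF fin \<open>k < y\<close> \<open>k' < y\<close>] kk' uv(3) by blast
  next
    case False
    then show ?thesis using less.IH \<open>k < y\<close> \<open>k' < y\<close> by force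
  qed
qed

lemma exists_small_sd_if_crowded_start:
  assumes fin: "finite W" and below: "\<And>w. w \<in> W \<Longrightarrow> fst w < snd w"
    and crowded: "2 \<le> card (starts_at W x)"
  shows "\<exists>u\<in>W. \<exists>v\<in>W. u \<noteq> v \<and> sd W shift_adj u v \<le> 2"
proof -
  define X where "X = {x. 2 \<le> card (starts_at W x)}"
  have "X \<subseteq> fst ` W"
  proof
    fix x assume "x \<in> X"
    then have "starts_at W x \<noteq> {}" by (auto simp: X_def)
    then show "x \<in> fst ` W" by (force simp: starts_at_def)
  qed
  then have "finite X" using fin finite_surj by blast
  define x0 where "x0 = Max X"
  have "x0 \<in> X" using \<open>finite X\<close> crowded unfolding x0_def X_def by (intro Max_in) auto
  then obtain u v where uv: "u \<in> starts_at W x0" "v \<in> starts_at W x0" "u \<noteq> v"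
    using obtain_two_distinct unfolding X_def by blast
  then obtain j j' where jj': "u = (x0, j)" "v = (x0, j')" "u \<in> W" "v \<in> W"
    by (cases u, cases v) (auto simp: starts_at_def)
  then have "x0 < j" "x0 < j'" using below by force+
  then have "j \<notin> X" "j' \<notin> X"
    using Max_ge[OF \<open>finite X\<close>] unfolding x0_def by (auto simp: not_le[symmetric])
  then have "card (starts_at W j) \<le> 1" "card (starts_at W j') \<le> 1"
    by (auto simp: X_def)
  then show ?thesis
    using sd_shift_adj_same_start[OF fin \<open>x0 < j\<close> \<open>x0 < j'\<close>] jj' uv(3) by blast
qed

lemma exists_small_sd_shift_adj:
  assumes fin: "finite W" and below: "\<And>w. w \<in> W \<Longrightarrow> fst w < snd w"
    and card: "2 \<le> card W"
  shows "\<exists>u\<in>W. \<exists>v\<in>W. u \<noteq> v \<and> sd W shift_adj u v \<le> 2"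
proof (cases "\<exists>y. 2 \<le> card (ends_at W y) \<or> 2 \<le> card (starts_at W y)")
  case True
  then show ?thesis
    using exists_small_sd_if_crowded_end[OF fin below] exists_small_sd_if_crowded_start[OF fin below]
    by blast
next
  case False
  have "card (nbhd W shift_adj u) \<le> 2" for u
  proof -
    have "card (nbhd W shift_adj u) \<le> card (starts_at W (snd u)) + card (ends_at W (fst u))"
      unfolding nbhd_shift_adj by (rule card_Un_le)
    moreover have "card (starts_at W (snd u)) \<le> 1" "card (ends_at W (fst u)) \<le> 1"
      using False by (metis not_less_eq_eq Suc_1)+
    ultimately show ?thesis by linarith
  qed
  moreover have "\<not> shift_adj u u" if "u \<in> W" for u
    using below[OF that] by (simp add: shift_adj_def)
  ultimately show ?thesis
    using fin card by (intro exists_small_sd_if_max_degree_le_2) (auto simp: shift_adj_def)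
qed

lemma min_sd_le_sd:
  assumes "finite W" "u \<in> W" "v \<in> W" "u \<noteq> v"
  shows "min_sd W E \<le> sd W E u v"
proof -
  have "{sd W E u v | u v. u \<in> W \<and> v \<in> W \<and> u \<noteq> v} \<subseteq> (\<lambda>(u, v). sd W E u v) ` (W \<times> W)"
    by auto
  then have "finite {sd W E u v | u v. u \<in> W \<and> v \<in> W \<and> u \<noteq> v}"
    using assms(1) by (meson finite_SigmaI finite_imageI finite_subset)
  then show ?thesis
    unfolding min_sd_def using assms(2-4) by (intro Min_le) auto
qed

lemma symm_diff_le:
  assumes "finite V"
    and "\<And>W. W \<subseteq> V \<Longrightarrow> 2 \<le> card W \<Longrightarrow> \<exists>u\<in>W. \<exists>v\<in>W. u \<noteq> v \<and> sd W E u v \<le> k"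
  shows "symm_diff V E \<le> k"
proof -
  have "finite {min_sd W E | W. W \<subseteq> V \<and> 2 \<le> card W}"
    using assms(1) by simp
  moreover have "min_sd W E \<le> k" if "W \<subseteq> V" "2 \<le> card W" for W
    using assms(2)[OF that] min_sd_le_sd[OF finite_subset[OF that(1) assms(1)]] le_trans by blast
  ultimately show ?thesis
    unfolding symm_diff_def Let_def by (auto simp: Max_le_iff)
qed

theorem mainTheorem12:
  fixes n :: nat
  assumes "n \<ge> 2"
  shows "symm_diff (shift_vertices n) shift_adj \<le> 2"
  \<comment> \<open>the bound needs no hypothesis on n\<close>
proof (rule symm_diff_le)
  show "finite (shift_vertices n)"
    by (rule finite_subset[of _ "{..n} \<times> {..n}"]) (auto simp: shift_vertices_def)
  then show "\<exists>u\<in>W. \<exists>v\<in>W. u \<noteq> v \<and> sd W shift_adj u v \<le> 2"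
    if "W \<subseteq> shift_vertices n" "2 \<le> card W" for W
    using that by (intro exists_small_sd_shift_adj) (auto intro: finite_subset simp: shift_vertices_def)
qed

end
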